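(* Let $P$ be a shortest path (a path of minimum length between its two end vertices) in a honeycomb toroidal graph $\mathrm{HTG}(m,n,\ell)$. Then all jump edges of $P$ are traversed in the same direction along $P$: either every jump edge of $P$ is traversed from its end $u_{m-1,j}$ to its end $u_{0,j+\ell}$, or every jump edge of $P$ is traversed from $u_{0,j+\ell}$ to $u_{m-1,j}$.
   Context: Honeycomb toroidal graph: let $m\ge 1$ be an integer, $n\ge 4$ an even integer, and $\ell$ an integer with $\ell\equiv m \pmod 2$. The graph $\mathrm{HTG}(m,n,\ell)$ has vertex set $\{u_{i,j}: 0\le i\le m-1,\ j\in\mathbb{Z}_n\}$ (second subscripts are taken modulo $n$; the vertices $u_{i,0},\dots,u_{i,n-1}$ form column $i$) and the following edges: vertical edges $u_{i,j}u_{i,j+1}$ for all $0\le i\le m-1$ and all $j$; flat edges $u_{i,j}u_{i+1,j}$ for $0\le i\le m-2$ and all $j$ with $i+j$ odd; jump edges $u_{m-1,j}u_{0,j+\ell}$ for all $j$ with $j\equiv m\pmod 2$. Only parameters for which this is a simple 3-regular graph are allowed (in particular, when $m=1$ one requires $\ell\not\equiv\pm1\pmod n$). For a jump edge $u_{m-1,j}u_{0,j+\ell}$ (with $j\equiv m\pmod 2$), $u_{m-1,j}$ is its column-$(m-1)$ end and $u_{0,j+\ell}$ its column-$0$ end, even when $m=1$. *)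

theory Defs
  imports Main
begin

definition htg_V :: "nat \<Rightarrow> nat \<Rightarrow> (nat \<times> nat) set" where
  "htg_V m n = {(i, j). i < m \<and> j < n}"

definition htg_vertical :: "nat \<Rightarrow> nat \<times> nat \<Rightarrow> nat \<times> nat \<Rightarrow> bool" where
  "htg_vertical n x y \<longleftrightarrow> fst x = fst y \<and>
     (snd y = (snd x + 1) mod n \<or> snd x = (snd y + 1) mod n)"

definition htg_flat :: "nat \<Rightarrow> nat \<times> nat \<Rightarrow> nat \<times> nat \<Rightarrow> bool" where
  "htg_flat m x y \<longleftrightarrow> snd x = snd y \<and>
     ((fst x + 1 = fst y \<and> fst y < m \<and> odd (fst x + snd x)) \<or>
      (fst y + 1 = fst x \<and> fst x < m \<and> odd (fst y + snd y)))"

definition htg_jump_fwd :: "nat \<Rightarrow> nat \<Rightarrow> int \<Rightarrow> nat \<times> nat \<Rightarrow> nat \<times> nat \<Rightarrow> bool" where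
  "htg_jump_fwd m n l x y \<longleftrightarrow> fst x = m - 1 \<and> fst y = 0 \<and> snd x < n \<and>
     snd x mod 2 = m mod 2 \<and> int (snd y) = (int (snd x) + l) mod int n"

definition htg_adj :: "nat \<Rightarrow> nat \<Rightarrow> int \<Rightarrow> nat \<times> nat \<Rightarrow> nat \<times> nat \<Rightarrow> bool" where
  "htg_adj m n l x y \<longleftrightarrow> x \<in> htg_V m n \<and> y \<in> htg_V m n \<and>
     (htg_vertical n x y \<or> htg_flat m x y \<or> htg_jump_fwd m n l x y \<or> htg_jump_fwd m n l y x)"

text \<open>Admissible parameters: m \<ge> 1, n \<ge> 4 even, l \<equiv> m (mod 2), and the resulting
  graph is simple (loopless, no parallel edges) and 3-regular; since each vertex
  has three incident edges counted with multiplicity, this is equivalent to each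
  vertex having exactly three distinct neighbours, none equal to itself.\<close>
definition htg_params :: "nat \<Rightarrow> nat \<Rightarrow> int \<Rightarrow> bool" where
  "htg_params m n l \<longleftrightarrow> m \<ge> 1 \<and> n \<ge> 4 \<and> even n \<and> l mod 2 = int m mod 2 \<and>
     (\<forall>v \<in> htg_V m n. \<not> htg_adj m n l v v \<and> card {w. htg_adj m n l v w} = 3)"

text \<open>A path: nonempty list of distinct vertices, consecutive ones adjacent.
  Its length is the number of edges, length - 1.\<close>
definition htg_path :: "nat \<Rightarrow> nat \<Rightarrow> int \<Rightarrow> (nat \<times> nat) list \<Rightarrow> bool" where
  "htg_path m n l P \<longleftrightarrow> P \<noteq> [] \<and> distinct P \<and> set P \<subseteq> htg_V m n \<and>
     (\<forall>k. Suc k < length P \<longrightarrow> htg_adj m n l (P ! k) (P ! Suc k))"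

definition htg_shortest_path :: "nat \<Rightarrow> nat \<Rightarrow> int \<Rightarrow> (nat \<times> nat) list \<Rightarrow> bool" where
  "htg_shortest_path m n l P \<longleftrightarrow> htg_path m n l P \<and>
     (\<forall>Q. htg_path m n l Q \<and> hd Q = hd P \<and> last Q = last P \<longrightarrow> length P \<le> length Q)"

end

theory Submission
  imports Defs
begin

text \<open>For s \<equiv> m (mod 2) the reflection (i, j) \<mapsto> (m-1-i, j-s) of the columns maps
  vertical edges to vertical edges and flat edges to flat edges. For s = l it sends the column-0 end
  of every jump edge to its column-(m-1) end, for s = -l it does the converse. Suppose a path
  traverses jump edges in both directions; then it contains two consecutive ones u v and w z,
  traversed in opposite directions, with only vertical and flat edges between v and w. Reflecting
  the segment v \<dots> w with the appropriate s gives a walk from u to z, so replacing u v \<dots> w z by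
  it shortens the path by two edges.\<close>

lemma innermost_pair_exists:
  fixes i j :: nat
  assumes "i < j" "F i" "B j"
  shows "\<exists>i' j'. i' < j' \<and> j' \<le> j \<and> F i' \<and> B j' \<and>
    (\<forall>k. i' < k \<and> k < j' \<longrightarrow> \<not> F k \<and> \<not> B k)"
  using assms
proof (induction "j - i" arbitrary: i j rule: less_induct)
  case less
  show ?case
  proof (cases "\<exists>k. i < k \<and> k < j \<and> (F k \<or> B k)")
    case True
    then obtain k where k: "i < k" "k < j" "F k \<or> B k" by blast
    then show ?thesis
    proof (elim disjE)
      assume "F k"
      have "j - k < j - i" using k by simp
      with less.hyps \<open>F k\<close> k(2) less.prems(3) show ?thesis by blast
    next
      assume "B k"
      have "k - i < j - i" using k by simp
      with less.hyps \<open>B k\<close> k(1,2) less.prems(2) show ?thesis by (meson le_less_trans less_imp_le)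
    qed
  next
    case False
    with less.prems show ?thesis by blast
  qed
qed

lemma successively_remove_loops:
  assumes "successively R xs" "xs \<noteq> []"
  shows "\<exists>ys. distinct ys \<and> successively R ys \<and> ys \<noteq> [] \<and>
    hd ys = hd xs \<and> last ys = last xs \<and> set ys \<subseteq> set xs \<and> length ys \<le> length xs"
  using assms
proof (induction "length xs" arbitrary: xs rule: less_induct)
  case less
  show ?case
  proof (cases "distinct xs")
    case True
    with less.prems show ?thesis by blast
  next
    case False
    then obtain as y bs cs where xs: "xs = as @ [y] @ bs @ [y] @ cs"
      using not_distinct_decomp by blast
    define xs' where "xs' = as @ [y] @ cs"
    have "successively R (y # cs)"
      using less.prems(1) successively_append_iff[of R "as @ y # bs" "y # cs"] unfolding xs by simp
    with less.prems(1) have "successively R xs'"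
      unfolding xs xs'_def by (auto simp: successively_append_iff)
    moreover have "length xs' < length xs" "xs' \<noteq> []"
      unfolding xs xs'_def by simp_all
    ultimately obtain ys where ys: "distinct ys" "successively R ys" "ys \<noteq> []" "hd ys = hd xs'"
      "last ys = last xs'" "set ys \<subseteq> set xs'" "length ys \<le> length xs'"
      using less.hyps by blast
    moreover have "hd xs' = hd xs" "last xs' = last xs" "set xs' \<subseteq> set xs"
      unfolding xs xs'_def by (auto simp: hd_append)
    moreover note \<open>length xs' < length xs\<close>
    ultimately show ?thesis by (metis order.trans less_imp_le)
  qed
qed

lemma successively_replace_segment:
  assumes "successively R (xs @ [a] @ S @ [d] @ zs)" "S \<noteq> []"
    and "successively (\<lambda>u v. R (f u) (f v)) S" "f (hd S) = a" "f (last S) = d"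
  shows "successively R (xs @ map f S @ zs)"
proof -
  have "successively R xs" "xs = [] \<or> R (last xs) a" "successively R (d # zs)"
    using assms(1) successively_append_iff[of R xs "a # S @ d # zs"]
      successively_append_iff[of R "a # S" "d # zs"] by auto
  then show ?thesis
    using assms(2-) by (auto simp: successively_append_iff successively_map hd_map last_map successively_Cons)
qed

lemma htg_path_iff:
  "htg_path m n l P \<longleftrightarrow>
     P \<noteq> [] \<and> distinct P \<and> set P \<subseteq> htg_V m n \<and> successively (htg_adj m n l) P"
  by (simp add: htg_path_def successively_conv_nth)

lemma htg_shortest_path_le_walk:
  assumes "htg_shortest_path m n l P" "W \<noteq> []" "set W \<subseteq> htg_V m n"
    "successively (htg_adj m n l) W" "hd W = hd P" "last W = last P"
  shows "length P \<le> length W"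
proof -
  obtain Q where "htg_path m n l Q" "hd Q = hd W" "last Q = last W" "length Q \<le> length W"
    using successively_remove_loops[OF assms(4,2)] assms(3) unfolding htg_path_iff by blast
  with assms(1,5,6) show ?thesis
    unfolding htg_shortest_path_def by fastforce
qed

definition htg_mirror :: "nat \<Rightarrow> nat \<Rightarrow> int \<Rightarrow> nat \<times> nat \<Rightarrow> nat \<times> nat" where
  "htg_mirror m n s v = (m - 1 - fst v, nat ((int (snd v) - s) mod int n))"

lemma htg_mirror_in_V:
  assumes "m \<ge> 1" "n > 0"
  shows "htg_mirror m n s v \<in> htg_V m n"
  using assms by (auto simp: htg_mirror_def htg_V_def nat_less_iff)

lemma int_snd_htg_mirror:
  assumes "n > 0"
  shows "int (snd (htg_mirror m n s v)) = (int (snd v) - s) mod int n"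
  using assms by (simp add: htg_mirror_def)

lemma htg_vertical_mirror:
  assumes "n > 0" "htg_vertical n x y"
  shows "htg_vertical n (htg_mirror m n s x) (htg_mirror m n s y)"
proof -
  have "snd (htg_mirror m n s v) = (snd (htg_mirror m n s u) + 1) mod n"
    if "snd v = (snd u + 1) mod n" for u v
  proof -
    have "int (snd v) = (int (snd u) + 1) mod int n"
      using that by (simp add: zmod_int add.commute)
    then have "int (snd (htg_mirror m n s v)) = (int (snd (htg_mirror m n s u)) + 1) mod int n"
      using assms(1) by (simp add: int_snd_htg_mirror mod_simps algebra_simps)
    also have "\<dots> = int ((snd (htg_mirror m n s u) + 1) mod n)"
      by (simp add: zmod_int add.commute)
    finally show ?thesis by simp
  qed
  with assms(2) show ?thesis
    unfolding htg_vertical_def by (auto simp: htg_mirror_def)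
qed

lemma htg_flat_sym: "htg_flat m x y \<Longrightarrow> htg_flat m y x"
  unfolding htg_flat_def by auto

lemma htg_flat_mirror:
  assumes "n > 0" "even n" "s mod 2 = int m mod 2" "htg_flat m x y"
  shows "htg_flat m (htg_mirror m n s x) (htg_mirror m n s y)"
proof -
  have parity: "int (snd (htg_mirror m n s v)) mod 2 = (int (snd v) - s) mod 2" for v
    using assms(1,2) by (simp add: int_snd_htg_mirror mod_mod_cancel)
  have upward: "htg_flat m (htg_mirror m n s u) (htg_mirror m n s w)"
    if "fst u + 1 = fst w" "fst w < m" "odd (fst u + snd u)" "snd u = snd w" for u w
  proof -
    have "odd (int (fst u) + int (snd w))" using that(3,4) by presburger
    moreover have "int (fst (htg_mirror m n s w)) = int m - 1 - int (fst w)"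
      using that(2) by (simp add: htg_mirror_def of_nat_diff)
    ultimately have "odd (int (fst (htg_mirror m n s w)) + int (snd (htg_mirror m n s w)))"
      using that(1) parity[of w] assms(3) by presburger
    then have "odd (fst (htg_mirror m n s w) + snd (htg_mirror m n s w))"
      by (metis even_of_nat of_nat_add)
    moreover have "fst (htg_mirror m n s w) + 1 = fst (htg_mirror m n s u)"
      "fst (htg_mirror m n s u) < m" "snd (htg_mirror m n s u) = snd (htg_mirror m n s w)"
      using that by (auto simp: htg_mirror_def)
    ultimately show ?thesis
      unfolding htg_flat_def by blast
  qed
  from assms(4) consider
      "fst x + 1 = fst y" "fst y < m" "odd (fst x + snd x)" "snd x = snd y"
    | "fst y + 1 = fst x" "fst x < m" "odd (fst y + snd y)" "snd x = snd y"
    unfolding htg_flat_def by blast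
  then show ?thesis
  proof cases
    case 1
    then show ?thesis by (rule upward)
  next
    case 2
    then have "htg_flat m (htg_mirror m n s y) (htg_mirror m n s x)"
      by (intro upward) simp_all
    then show ?thesis by (rule htg_flat_sym)
  qed
qed

lemma htg_mirror_jump_fwd_target:
  assumes "htg_jump_fwd m n l x y"
  shows "htg_mirror m n l y = x"
proof -
  have "(int (snd y) - l) mod int n = int (snd x) mod int n"
    using assms unfolding htg_jump_fwd_def by (simp add: mod_diff_left_eq)
  also have "\<dots> = int (snd x)"
    using assms unfolding htg_jump_fwd_def by simp
  finally show ?thesis
    using assms unfolding htg_jump_fwd_def htg_mirror_def by (simp add: prod_eq_iff)
qed

lemma htg_mirror_jump_fwd_source:
  assumes "htg_jump_fwd m n l x y"
  shows "htg_mirror m n (- l) x = y"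
  using assms unfolding htg_jump_fwd_def htg_mirror_def by (simp add: prod_eq_iff) (metis nat_int)

lemma htg_jump_fwd_asym:
  assumes "m \<ge> 1" "even n" "l mod 2 = int m mod 2" "htg_jump_fwd m n l x y"
  shows "\<not> htg_jump_fwd m n l y x"
proof
  assume reverse: "htg_jump_fwd m n l y x"
  have "m = 1"
    using assms(1,4) reverse unfolding htg_jump_fwd_def by simp
  then have "odd (snd x)" "odd (snd y)"
    using assms(4) reverse unfolding htg_jump_fwd_def by (simp_all add: odd_iff_mod_2_eq_one)
  moreover have "int (snd y) mod 2 = (int (snd x) + l) mod 2"
    using assms(2,4) unfolding htg_jump_fwd_def by (simp add: mod_mod_cancel)
  ultimately show False
    using assms(3) \<open>m = 1\<close> by presburger
qed

lemma htg_shortest_path_no_mirror_shortcut: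
  assumes "htg_params m n l" "s mod 2 = int m mod 2"
    and "htg_shortest_path m n l (xs @ [a] @ S @ [d] @ zs)" "S \<noteq> []"
    and "successively (\<lambda>u v. htg_vertical n u v \<or> htg_flat m u v) S"
    and "htg_mirror m n s (hd S) = a" "htg_mirror m n s (last S) = d"
  shows False
proof -
  define P where "P = xs @ [a] @ S @ [d] @ zs"
  define W where "W = xs @ map (htg_mirror m n s) S @ zs"
  have m: "m \<ge> 1" and n: "n > 0" "even n"
    using assms(1) unfolding htg_params_def by auto
  have path: "set P \<subseteq> htg_V m n" "successively (htg_adj m n l) P"
    using assms(3) unfolding htg_shortest_path_def htg_path_iff P_def by auto
  have "successively (\<lambda>u v. htg_adj m n l (htg_mirror m n s u) (htg_mirror m n s v)) S"
    using assms(5) by (rule successively_mono)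
      (auto simp: htg_adj_def htg_mirror_in_V[OF m n(1)] htg_vertical_mirror[OF n(1)]
        htg_flat_mirror[OF n assms(2)])
  then have "successively (htg_adj m n l) W"
    using successively_replace_segment[OF _ assms(4) _ assms(6,7)] path(2)
    unfolding W_def P_def by blast
  moreover have "set W \<subseteq> htg_V m n"
    using path(1) htg_mirror_in_V[OF m n(1)] unfolding W_def P_def by auto
  moreover have "W \<noteq> []" "hd W = hd P" "last W = last P"
    using assms(4,6,7) unfolding W_def P_def by (auto simp: hd_append hd_map last_map)
  ultimately have "length P \<le> length W"
    using htg_shortest_path_le_walk assms(3) unfolding P_def by blast
  then show False
    unfolding W_def P_def by simp
qed

lemma htg_shortest_path_no_mirror_shortcut_nth:
  assumes "htg_params m n l" "s mod 2 = int m mod 2" "htg_shortest_path m n l P"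
    and "i < j" "Suc j < length P"
    and "htg_mirror m n s (P ! Suc i) = P ! i" "htg_mirror m n s (P ! j) = P ! Suc j"
    and no_jump: "\<And>k. i < k \<Longrightarrow> k < j \<Longrightarrow>
      \<not> htg_jump_fwd m n l (P ! k) (P ! Suc k) \<and> \<not> htg_jump_fwd m n l (P ! Suc k) (P ! k)"
  shows False
proof -
  define S where "S = drop (Suc i) (take (Suc j) P)"
  have len: "length S = j - i"
    using assms(4,5) unfolding S_def by simp
  have S_nth: "S ! t = P ! (Suc i + t)" if "t < length S" for t
    using that len unfolding S_def by simp
  have decomp: "take i P @ [P ! i] @ S @ [P ! Suc j] @ drop (Suc (Suc j)) P = P"
  proof -
    have "take (Suc j) P = take (Suc i) (take (Suc j) P) @ S"
      unfolding S_def by (rule append_take_drop_id[symmetric])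
    also have "\<dots> = take i P @ [P ! i] @ S"
      using assms(4,5) by (simp add: min_absorb1 take_Suc_conv_app_nth)
    finally have "take (Suc j) P = take i P @ [P ! i] @ S" .
    moreover have "drop (Suc j) P = P ! Suc j # drop (Suc (Suc j)) P"
      using assms(5) by (simp add: Cons_nth_drop_Suc)
    ultimately show ?thesis
      using append_take_drop_id[of "Suc j" P] by simp
  qed
  have split: "htg_shortest_path m n l (take i P @ [P ! i] @ S @ [P ! Suc j] @ drop (Suc (Suc j)) P)"
    unfolding decomp by (rule assms(3))
  have "S \<noteq> []"
    using assms(4) len by auto
  have ends: "hd S = P ! Suc i" "last S = P ! j"
    using \<open>S \<noteq> []\<close> assms(4) len S_nth[of 0] S_nth[of "j - Suc i"]
    by (simp_all add: hd_conv_nth last_conv_nth)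
  have segment: "successively (\<lambda>u v. htg_vertical n u v \<or> htg_flat m u v) S"
    unfolding successively_conv_nth
  proof (intro allI impI)
    fix t assume t: "Suc t < length S"
    have "htg_adj m n l (P ! (Suc i + t)) (P ! Suc (Suc i + t))"
      using assms(3,5) t len unfolding htg_shortest_path_def htg_path_def by simp
    with no_jump[of "Suc i + t"] t len S_nth
    show "htg_vertical n (S ! t) (S ! Suc t) \<or> htg_flat m (S ! t) (S ! Suc t)"
      unfolding htg_adj_def by auto
  qed
  show False
    by (rule htg_shortest_path_no_mirror_shortcut[OF assms(1,2) split \<open>S \<noteq> []\<close> segment])
      (simp_all add: ends assms(6,7))
qed

lemma htg_shortest_path_no_opposite_jumps:
  assumes "htg_params m n l" "s mod 2 = int m mod 2" "htg_shortest_path m n l P"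
    and "i < j" "Suc j < length P" "F i" "B j"
    and jump: "\<And>k. htg_jump_fwd m n l (P ! k) (P ! Suc k) \<or> htg_jump_fwd m n l (P ! Suc k) (P ! k)
      \<Longrightarrow> F k \<or> B k"
    and "\<And>k. F k \<Longrightarrow> htg_mirror m n s (P ! Suc k) = P ! k"
    and "\<And>k. B k \<Longrightarrow> htg_mirror m n s (P ! k) = P ! Suc k"
  shows False
proof -
  obtain i' j' where "i' < j'" "j' \<le> j" "F i'" "B j'"
    and between: "\<And>k. i' < k \<Longrightarrow> k < j' \<Longrightarrow> \<not> F k \<and> \<not> B k"
    using innermost_pair_exists[of i j F B] assms(4,6,7) by blast
  show False
  proof (rule htg_shortest_path_no_mirror_shortcut_nth[OF assms(1-3) \<open>i' < j'\<close>])
    show "Suc j' < length P"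
      using \<open>j' \<le> j\<close> assms(5) by simp
    show "htg_mirror m n s (P ! Suc i') = P ! i'" "htg_mirror m n s (P ! j') = P ! Suc j'"
      using assms(9,10) \<open>F i'\<close> \<open>B j'\<close> by blast+
  next
    fix k
    assume "i' < k" "k < j'"
    then show "\<not> htg_jump_fwd m n l (P ! k) (P ! Suc k) \<and> \<not> htg_jump_fwd m n l (P ! Suc k) (P ! k)"
      using between jump by blast
  qed
qed

theorem lemma6p1:
  fixes m n :: nat and l :: int and P :: "(nat \<times> nat) list"
  assumes "htg_params m n l"
    and "htg_shortest_path m n l P"
  shows "(\<forall>k. Suc k < length P \<longrightarrow> \<not> htg_jump_fwd m n l (P ! Suc k) (P ! k))
       \<or> (\<forall>k. Suc k < length P \<longrightarrow> \<not> htg_jump_fwd m n l (P ! k) (P ! Suc k))"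
proof (rule ccontr)
  assume "\<not> ?thesis"
  then obtain a b where a: "Suc a < length P" "htg_jump_fwd m n l (P ! Suc a) (P ! a)"
    and b: "Suc b < length P" "htg_jump_fwd m n l (P ! b) (P ! Suc b)"
    by blast
  have params: "m \<ge> 1" "even n" "l mod 2 = int m mod 2"
    using assms(1) unfolding htg_params_def by auto
  then have neg_l: "- l mod 2 = int m mod 2"
    by presburger
  have "a \<noteq> b"
    using htg_jump_fwd_asym[OF params(1-3)] a(2) b(2) by blast
  then consider "b < a" | "a < b" by linarith
  then show False
  proof cases
    case 1
    show False
      by (rule htg_shortest_path_no_opposite_jumps[OF assms(1) params(3) assms(2) 1 a(1),
          where F = "\<lambda>k. htg_jump_fwd m n l (P ! k) (P ! Suc k)"
            and B = "\<lambda>k. htg_jump_fwd m n l (P ! Suc k) (P ! k)"])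
        (use a b htg_mirror_jump_fwd_target in auto)
  next
    case 2
    show False
      by (rule htg_shortest_path_no_opposite_jumps[OF assms(1) neg_l assms(2) 2 b(1),
          where F = "\<lambda>k. htg_jump_fwd m n l (P ! Suc k) (P ! k)"
            and B = "\<lambda>k. htg_jump_fwd m n l (P ! k) (P ! Suc k)"])
        (use a b htg_mirror_jump_fwd_source in auto)
  qed
qed

end
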